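(* Let $h,m$ be positive integers with $h=1$ or $\omega(m)=1$, and let $c$ be a positive integer such that no $\mathrm{CC}^h[m]$-circuit computes the $n$-ary conjunction $\mathrm{AND}_n$ for any $n>c$. Let $L\subseteq\{0,1\}^*$ be a language recognizable by $\mathrm{CC}^h[m]$-circuits (i.e. for every $n$ some $\mathrm{CC}^h[m]$-circuit with $n$ inputs outputs $1$ exactly on the words of $L$ of length $n$). Then for every $n$ the number of words of length $n$ in $L$ is either $0$ or at least $2^{n-c}$.
   Context: For an integer $m\ge 1$ and $A\subseteq\{0,\dots,m-1\}$, a gate $\mathrm{MOD}_m^A$ takes finitely many Boolean inputs (counted with multiplicity) and outputs $1$ if their sum modulo $m$ lies in $A$, and $0$ otherwise. A $\mathrm{CC}^h[m]$-circuit is a depth-$h$ Boolean circuit all of whose gates are of the form $\mathrm{MOD}_m^A$ ($A$ may vary between gates), with Boolean variable inputs (constants allowed) and multiple wires allowed. $\omega(m)$ is the number of distinct prime divisors of $m$. *)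

theory Defs
  imports Complex_Main "HOL-Computational_Algebra.Primes"
begin

text \<open>A circuit is a tree (DAG unfolded):
  an input variable (index), a Boolean constant, or a gate MOD_m^A whose
  inputs are given as a list (so multiple wires are allowed).\<close>

datatype circ = Var nat | Const bool | Gate "nat set" "circ list"

fun eval_circ :: "nat \<Rightarrow> circ \<Rightarrow> bool list \<Rightarrow> bool" where
  "eval_circ m (Var i) x = x ! i"
| "eval_circ m (Const b) x = b"
| "eval_circ m (Gate A cs) x =
     ((sum_list (map (\<lambda>c. if eval_circ m c x then 1 else 0) cs) :: nat) mod m \<in> A)"

fun depth :: "circ \<Rightarrow> nat" where
  "depth (Var i) = 0"
| "depth (Const b) = 0"
| "depth (Gate A cs) = Suc (fold max (map depth cs) 0)"

fun wf_circ :: "nat \<Rightarrow> nat \<Rightarrow> circ \<Rightarrow> bool" where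
  "wf_circ m n (Var i) = (i < n)"
| "wf_circ m n (Const b) = True"
| "wf_circ m n (Gate A cs) = (A \<subseteq> {0..<m} \<and> (\<forall>c\<in>set cs. wf_circ m n c))"

definition CC_circuit :: "nat \<Rightarrow> nat \<Rightarrow> nat \<Rightarrow> circ \<Rightarrow> bool" where
  "CC_circuit h m n C \<longleftrightarrow> wf_circ m n C \<and> depth C \<le> h"

definition computes :: "nat \<Rightarrow> nat \<Rightarrow> circ \<Rightarrow> (bool list \<Rightarrow> bool) \<Rightarrow> bool" where
  "computes m n C f \<longleftrightarrow> (\<forall>x. length x = n \<longrightarrow> eval_circ m C x = f x)"

definition omega :: "nat \<Rightarrow> nat" where
  "omega m = card (prime_factors m)"

definition CC_recognizable :: "nat \<Rightarrow> nat \<Rightarrow> bool list set \<Rightarrow> bool" where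
  "CC_recognizable h m L \<longleftrightarrow>
     (\<forall>n. \<exists>C. CC_circuit h m n C \<and> computes m n C (\<lambda>x. x \<in> L))"

end

(*
  Induction on the number n of inputs. If two words accepted by the circuit differ at input i,
  fixing input i to either constant leaves two circuits of the same depth with n - 1 inputs,
  each accepting some word, and their accepted sets partition the original one: the lower
  bound doubles. If the circuit accepts a single word w, negate the inputs on which w is false;
  an input wire of a MOD_m gate can be negated without adding depth, so this yields a circuit
  of the same depth computing AND_n, hence n <= c and the single word suffices.
*)

theory Submission
  imports Defs
begin

definition true_wires :: "nat \<Rightarrow> circ list \<Rightarrow> bool list \<Rightarrow> nat" where
  "true_wires m ds x = (\<Sum>d\<leftarrow>ds. if eval_circ m d x then 1 else 0)"

definition accepted :: "nat \<Rightarrow> nat \<Rightarrow> circ \<Rightarrow> bool list set" where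
  "accepted m n C = {x. length x = n \<and> eval_circ m C x}"

definition insert_at :: "nat \<Rightarrow> 'a \<Rightarrow> 'a list \<Rightarrow> 'a list" where
  "insert_at i a xs = take i xs @ a # drop i xs"

lemma eval_circ_Gate: "eval_circ m (Gate A cs) x \<longleftrightarrow> true_wires m cs x mod m \<in> A"
  by (simp add: true_wires_def)

lemma true_wires_concat:
  "true_wires m (concat (map f cs)) x = (\<Sum>c\<leftarrow>cs. true_wires m (f c) x)"
  by (induction cs) (simp_all add: true_wires_def)

lemma true_wires_eq_sum_singletons: "true_wires m cs x = (\<Sum>c\<leftarrow>cs. true_wires m [c] x)"
  by (induction cs) (simp_all add: true_wires_def)

lemma mod_sum_list_cong:
  assumes "\<And>c. c \<in> set cs \<Longrightarrow> f c mod m = g c mod m"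
  shows "(\<Sum>c\<leftarrow>cs. f c) mod m = (\<Sum>c\<leftarrow>cs. g c :: nat) mod m"
  using assms
proof (induction cs)
  case (Cons a cs)
  then have "f a mod m = g a mod m" and "(\<Sum>c\<leftarrow>cs. f c) mod m = (\<Sum>c\<leftarrow>cs. g c) mod m"
    by simp_all
  from mod_add_cong[OF this] show ?case by simp
qed simp

lemma eval_circ_Gate_concat_cong:
  assumes "\<And>c. c \<in> set cs \<Longrightarrow> true_wires m (f c) x mod m = true_wires m [c] y mod m"
  shows "eval_circ m (Gate A (concat (map f cs))) x = eval_circ m (Gate A cs) y"
proof -
  have "true_wires m (concat (map f cs)) x mod m = true_wires m cs y mod m"
    unfolding true_wires_concat true_wires_eq_sum_singletons[of m cs y]
    using assms by (rule mod_sum_list_cong)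
  then show ?thesis by (simp only: eval_circ_Gate)
qed

lemma fold_max_map_le_iff:
  "fold max (map f xs) (0::nat) \<le> k \<longleftrightarrow> (\<forall>x\<in>set xs. f x \<le> k)"
proof -
  have "fold max (map f xs) (0::nat) = Max (set (0 # map f xs))"
    by (simp only: Max.set_eq_fold)
  then show ?thesis by auto
qed

text \<open>Inside a MOD_m gate the negation of x is simulated by the m wires
  1, x, ..., x, since 1 + (m - 1) x is congruent to 1 - x modulo m.\<close>

fun negated_wires :: "nat \<Rightarrow> (nat \<Rightarrow> bool) \<Rightarrow> circ \<Rightarrow> circ list" where
  "negated_wires m fl (Var i) = (if fl i then Const True # replicate (m - 1) (Var i) else [Var i])"
| "negated_wires m fl (Const b) = [Const b]"
| "negated_wires m fl (Gate A cs) = [Gate A (concat (map (negated_wires m fl) cs))]"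

lemma true_wires_negated_wires:
  assumes "m > 0" and flip: "\<And>i. i < n \<Longrightarrow> y ! i = (x ! i \<noteq> fl i)" and "wf_circ m n c"
  shows "true_wires m (negated_wires m fl c) x mod m = true_wires m [c] y mod m"
  using assms(3)
proof (induction c)
  case (Var i)
  show ?case
  proof (cases "fl i")
    case True
    have "true_wires m (negated_wires m fl (Var i)) x = 1 + (m - 1) * (if x ! i then 1 else 0)"
      using True by (simp add: true_wires_def sum_list_replicate)
    then show ?thesis
      using True Var flip \<open>m > 0\<close> by (auto simp: true_wires_def)
  next
    case False
    then show ?thesis using Var flip by (simp add: true_wires_def)
  qed
next
  case (Gate A cs)
  then have "eval_circ m (Gate A (concat (map (negated_wires m fl) cs))) x = eval_circ m (Gate A cs) y"
    by (intro eval_circ_Gate_concat_cong) auto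
  then show ?case by (simp add: true_wires_def)
qed (simp add: true_wires_def)

lemma wf_negated_wires: "wf_circ m n c \<Longrightarrow> d \<in> set (negated_wires m fl c) \<Longrightarrow> wf_circ m n d"
  by (induction c arbitrary: d) (auto split: if_splits)

lemma depth_negated_wires: "d \<in> set (negated_wires m fl c) \<Longrightarrow> depth d \<le> depth c"
proof (induction c arbitrary: d)
  case (Gate A cs)
  have "depth e \<le> fold max (map depth cs) 0"
    if "e \<in> set (concat (map (negated_wires m fl) cs))" for e
  proof -
    from that obtain c where "c \<in> set cs" "e \<in> set (negated_wires m fl c)" by auto
    with Gate.IH have "depth e \<le> depth c" by blast
    also have "\<dots> \<le> fold max (map depth cs) 0"
      using \<open>c \<in> set cs\<close> fold_max_map_le_iff[of depth cs] by blast
    finally show ?thesis .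
  qed
  then show ?case using Gate.prems by (simp add: fold_max_map_le_iff)
qed (auto split: if_splits)

text \<open>A root variable cannot be negated, but it need not be: it is true on the accepted word w,
  so \<open>map2 (=) x w\<close> agrees with x there.\<close>

lemma negate_inputs:
  assumes "m > 0" and C: "CC_circuit h m n C" and w: "w \<in> accepted m n C"
  shows "\<exists>C'. CC_circuit h m n C' \<and>
           (\<forall>x. length x = n \<longrightarrow> eval_circ m C' x = eval_circ m C (map2 (=) x w))"
proof (cases C)
  case (Gate A cs)
  define fl where "fl i = (\<not> w ! i)" for i
  define C' where "C' = Gate A (concat (map (negated_wires m fl) cs))"
  have "C' \<in> set (negated_wires m fl C)" by (simp add: Gate C'_def)
  then have "CC_circuit h m n C'"
    using C wf_negated_wires[of m n C] depth_negated_wires[of C' m fl C]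
    by (auto simp: CC_circuit_def)
  moreover have "eval_circ m C' x = eval_circ m C (map2 (=) x w)" if "length x = n" for x
    unfolding C'_def Gate
  proof (rule eval_circ_Gate_concat_cong)
    fix c assume "c \<in> set cs"
    then have "wf_circ m n c" using C Gate by (simp add: CC_circuit_def)
    moreover have "map2 (=) x w ! i = (x ! i \<noteq> fl i)" if "i < n" for i
      using that \<open>length x = n\<close> w by (auto simp: fl_def accepted_def)
    ultimately show "true_wires m (negated_wires m fl c) x mod m = true_wires m [c] (map2 (=) x w) mod m"
      using \<open>m > 0\<close> true_wires_negated_wires by blast
  qed
  ultimately show ?thesis by blast
next
  case (Var i)
  then have "eval_circ m C x = eval_circ m C (map2 (=) x w)" if "length x = n" for x
    using that w C by (auto simp: accepted_def CC_circuit_def)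
  with C show ?thesis by blast
next
  case (Const b)
  with C show ?thesis by auto
qed

lemma unique_accepted_computes_AND:
  assumes "m > 0" and C: "CC_circuit h m n C" and unique: "accepted m n C = {w}"
  shows "\<exists>C'. CC_circuit h m n C' \<and> computes m n C' (\<lambda>x. \<forall>i<n. x ! i)"
proof -
  have w: "w \<in> accepted m n C" and "length w = n"
    using unique by (auto simp: accepted_def)
  obtain C' where C': "CC_circuit h m n C'"
    and eval_C': "\<And>x. length x = n \<Longrightarrow> eval_circ m C' x = eval_circ m C (map2 (=) x w)"
    using negate_inputs[OF \<open>m > 0\<close> C w] by blast
  have "eval_circ m C' x = (\<forall>i<n. x ! i)" if "length x = n" for x
  proof -
    have "eval_circ m C' x \<longleftrightarrow> map2 (=) x w \<in> accepted m n C"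
      using eval_C' that \<open>length w = n\<close> by (simp add: accepted_def)
    also have "\<dots> \<longleftrightarrow> map2 (=) x w = w"
      using unique by simp
    also have "\<dots> \<longleftrightarrow> (\<forall>i<n. x ! i)"
      using that \<open>length w = n\<close> by (auto simp: list_eq_iff_nth_eq)
    finally show ?thesis .
  qed
  with C' show ?thesis unfolding computes_def by blast
qed

fun restrict_var :: "nat \<Rightarrow> bool \<Rightarrow> circ \<Rightarrow> circ" where
  "restrict_var i b (Var j) = (if j < i then Var j else if j = i then Const b else Var (j - 1))"
| "restrict_var i b (Const b') = Const b'"
| "restrict_var i b (Gate A cs) = Gate A (map (restrict_var i b) cs)"

lemma eval_restrict_var:
  "i \<le> length x \<Longrightarrow> wf_circ m (Suc (length x)) c \<Longrightarrow>
    eval_circ m (restrict_var i b c) x = eval_circ m c (insert_at i b x)"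
proof (induction c)
  case (Var j)
  then show ?case by (auto simp: insert_at_def nth_append min_def)
next
  case (Gate A cs)
  then have "map (\<lambda>c. if eval_circ m (restrict_var i b c) x then 1 else 0) cs
     = map (\<lambda>c. if eval_circ m c (insert_at i b x) then 1 else (0::nat)) cs"
    by (intro map_cong) auto
  then show ?case by (simp add: o_def del: map_eq_conv)
qed auto

lemma wf_restrict_var: "wf_circ m (Suc n) c \<Longrightarrow> i \<le> n \<Longrightarrow> wf_circ m n (restrict_var i b c)"
  by (induction c) auto

lemma depth_restrict_var [simp]: "depth (restrict_var i b c) = depth c"
proof (induction c)
  case (Gate A cs)
  then show ?case by (simp cong: map_cong)
qed auto

lemma CC_circuit_restrict_var:
  "CC_circuit h m (Suc n) C \<Longrightarrow> i \<le> n \<Longrightarrow> CC_circuit h m n (restrict_var i b C)"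
  by (simp add: CC_circuit_def wf_restrict_var)

lemma inj_on_insert_at: "inj_on (insert_at i a) {xs. i \<le> length xs}"
proof
  fix xs ys assume "xs \<in> {xs. i \<le> length xs}" "ys \<in> {xs. i \<le> length xs}"
    and "insert_at i a xs = insert_at i a ys"
  then have "take i xs = take i ys \<and> drop i xs = drop i ys"
    by (simp add: insert_at_def append_eq_append_conv)
  then show "xs = ys" by (metis append_take_drop_id)
qed

lemma insert_at_image_accepted:
  assumes "i \<le> k" and "wf_circ m (Suc k) C"
  shows "insert_at i b ` accepted m k (restrict_var i b C) = {x \<in> accepted m (Suc k) C. x ! i = b}"
proof (intro equalityI subsetI)
  fix x assume "x \<in> insert_at i b ` accepted m k (restrict_var i b C)"
  then obtain y where "x = insert_at i b y" "length y = k" "eval_circ m (restrict_var i b C) y"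
    by (auto simp: accepted_def)
  with assms show "x \<in> {x \<in> accepted m (Suc k) C. x ! i = b}"
    by (auto simp: accepted_def eval_restrict_var insert_at_def nth_append)
next
  fix x assume x: "x \<in> {x \<in> accepted m (Suc k) C. x ! i = b}"
  define y where "y = take i x @ drop (Suc i) x"
  have "length x = Suc k" "eval_circ m C x" "x ! i = b" using x by (auto simp: accepted_def)
  then have "length y = k" and "insert_at i b y = x"
    using \<open>i \<le> k\<close> id_take_nth_drop[of i x] by (auto simp: y_def insert_at_def min_def)
  with assms \<open>eval_circ m C x\<close> have "y \<in> accepted m k (restrict_var i b C)"
    by (simp add: accepted_def eval_restrict_var)
  with \<open>insert_at i b y = x\<close> show "x \<in> insert_at i b ` accepted m k (restrict_var i b C)"
    by blast
qed

lemma card_accepted_restrict_var: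
  assumes "i \<le> k" and "wf_circ m (Suc k) C"
  shows "card (accepted m k (restrict_var i b C)) = card {x \<in> accepted m (Suc k) C. x ! i = b}"
proof -
  have "inj_on (insert_at i b) (accepted m k (restrict_var i b C))"
    by (rule inj_on_subset[OF inj_on_insert_at]) (use \<open>i \<le> k\<close> in \<open>auto simp: accepted_def\<close>)
  then show ?thesis
    using insert_at_image_accepted[OF assms] card_image by metis
qed

lemma finite_accepted: "finite (accepted m n C)"
  by (rule finite_subset[OF _ finite_lists_length_eq[of UNIV n]]) (auto simp: accepted_def)

lemma card_accepted_Suc:
  assumes "i \<le> k" and "wf_circ m (Suc k) C"
  shows "card (accepted m (Suc k) C) =
           card (accepted m k (restrict_var i True C)) + card (accepted m k (restrict_var i False C))"
proof -
  let ?slice = "\<lambda>b. {x \<in> accepted m (Suc k) C. x ! i = b}"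
  have "card (accepted m (Suc k) C) = card (?slice True \<union> ?slice False)"
    by (rule arg_cong[where f = card]) auto
  also have "\<dots> = card (?slice True) + card (?slice False)"
    by (rule card_Un_disjoint) (use finite_accepted in auto)
  finally show ?thesis by (simp only: card_accepted_restrict_var[OF assms])
qed

lemma card_accepted_lower_bound:
  assumes "m > 0"
    and no_AND: "\<forall>n > c. \<not> (\<exists>C. CC_circuit h m n C \<and> computes m n C (\<lambda>x. \<forall>i<n. x ! i))"
  shows "CC_circuit h m n C \<Longrightarrow> accepted m n C \<noteq> {} \<Longrightarrow> 2 ^ n \<le> 2 ^ c * card (accepted m n C)"
proof (induction n arbitrary: C)
  case 0
  then have "card (accepted m 0 C) \<ge> 1"
    using finite_accepted by (simp add: Suc_le_eq card_gt_0_iff)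
  then show ?case by (simp add: mult_le_mono)
next
  case (Suc k)
  let ?S = "accepted m (Suc k) C"
  obtain w where "w \<in> ?S" using Suc.prems(2) by auto
  show ?case
  proof (cases "?S = {w}")
    case True
    then have "\<exists>C'. CC_circuit h m (Suc k) C' \<and> computes m (Suc k) C' (\<lambda>x. \<forall>i<Suc k. x ! i)"
      by (rule unique_accepted_computes_AND[OF \<open>m > 0\<close> Suc.prems(1)])
    with no_AND have "\<not> Suc k > c" by auto
    then have "(2::nat) ^ Suc k \<le> 2 ^ c"
      by (intro power_increasing) simp_all
    then show ?thesis using True by simp
  next
    case False
    with \<open>w \<in> ?S\<close> obtain x where x: "x \<in> ?S" "x \<noteq> w" by blast
    then obtain i where "i \<le> k" "x ! i \<noteq> w ! i"
      using \<open>w \<in> ?S\<close> by (auto simp: accepted_def list_eq_iff_nth_eq less_Suc_eq_le)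
    have wf: "wf_circ m (Suc k) C" using Suc.prems(1) by (simp add: CC_circuit_def)
    have "{y \<in> ?S. y ! i = b} \<noteq> {}" for b
      using x(1) \<open>w \<in> ?S\<close> \<open>x ! i \<noteq> w ! i\<close> by (cases b; cases "x ! i") blast+
    then have "accepted m k (restrict_var i b C) \<noteq> {}" for b
      by (simp flip: insert_at_image_accepted[OF \<open>i \<le> k\<close> wf])
    with CC_circuit_restrict_var[OF Suc.prems(1) \<open>i \<le> k\<close>]
    have IH: "2 ^ k \<le> 2 ^ c * card (accepted m k (restrict_var i b C))" for b
      by (rule Suc.IH)
    have "2 ^ Suc k = 2 ^ k + (2::nat) ^ k" by simp
    also have "\<dots> \<le> 2 ^ c * card (accepted m k (restrict_var i True C))
                  + 2 ^ c * card (accepted m k (restrict_var i False C))"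
      by (intro add_mono IH)
    also have "\<dots> = 2 ^ c * card ?S"
      by (simp add: card_accepted_Suc[OF \<open>i \<le> k\<close> wf] add_mult_distrib2)
    finally show ?thesis .
  qed
qed

lemma power_int_diff_le_of_nat:
  assumes "2 ^ n \<le> 2 ^ c * (N :: nat)"
  shows "(2::real) powi (int n - int c) \<le> real N"
proof -
  have "real (2 ^ n) \<le> real (2 ^ c * N)"
    using assms by (simp only: of_nat_le_iff)
  then have "(2::real) ^ n / 2 ^ c \<le> real N"
    by (simp add: divide_le_eq mult.commute)
  then show ?thesis by (simp add: power_int_diff)
qed

theorem corollary2p5:
  fixes h m c :: nat and L :: "bool list set"
  assumes "h > 0" and "m > 0"
    and "h = 1 \<or> omega m = 1"
    and "c > 0"
    and "\<forall>n > c. \<not> (\<exists>C. CC_circuit h m n C \<and> computes m n C (\<lambda>x. \<forall>i<n. x ! i))"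
    and "CC_recognizable h m L"
  shows "\<forall>n. card {x \<in> L. length x = n} = 0 \<or>
             real (card {x \<in> L. length x = n}) \<ge> (2::real) powi (int n - int c)"
proof
  fix n
  obtain C where C: "CC_circuit h m n C" and "computes m n C (\<lambda>x. x \<in> L)"
    using assms(6) unfolding CC_recognizable_def by blast
  then have L_eq: "{x \<in> L. length x = n} = accepted m n C"
    by (auto simp: computes_def accepted_def)
  show "card {x \<in> L. length x = n} = 0 \<or>
          real (card {x \<in> L. length x = n}) \<ge> (2::real) powi (int n - int c)"
  proof (cases "accepted m n C = {}")
    case False
    with card_accepted_lower_bound[OF assms(2,5) C]
    show ?thesis by (simp add: L_eq power_int_diff_le_of_nat)
  qed (simp add: L_eq)
qed

end
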